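(* Let $\tau_k>0$ ($1\le k\le N$) be time steps, $t_n=\sum_{k=1}^n\tau_k$, $r_k=\tau_k/\tau_{k-1}$ for $2\le k\le N$, $r_1:=0$, with $0<r_k<1+\sqrt2$ for $2\le k\le N$. Define $b_0^{(1)}=1/\tau_1$, $b_1^{(1)}=0$ and for $n\ge2$ $b_0^{(n)}=\frac{1+2r_n}{\tau_n(1+r_n)}$, $b_1^{(n)}=-\frac{r_n^2}{\tau_n(1+r_n)}$. Let $\eta$ satisfy $\frac{r_k^2}{1+2r_k}\le\eta<1$ for all $2\le k\le N$, and define $d_0^{(n)}=b_0^{(n)}$, $d_j^{(n)}=\eta^{j-1}(b_0^{(n)}\eta+b_1^{(n)})$ for $1\le j\le n$. Let $\kappa>0$, $\lambda\in(0,1)$, and let $\{g^k\}_{k=1}^N$, $\{w^k\}_{k=0}^N$ be nonnegative sequences with $$\sum_{k=1}^n d_{n-k}^{(n)}(w^k-w^{k-1})\le\kappa\sum_{k=1}^n\lambda^{n-k}w^k+g^n\qquad\text{for }1\le n\le N.$$ If $b_0^{(n)}\ge2\kappa$ (for all $1\le n\le N$), then $$w^n\le2\exp\Big(\frac{2\kappa t_n}{1-\lambda}\Big)\Big(w^0+\sum_{j=1}^n\frac{g^j}{b_0^{(j)}}\Big)\qquad\text{for }1\le n\le N.$$ *)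

theory Defs
  imports "HOL-Analysis.Analysis"
begin

definition tgrid :: "(nat \<Rightarrow> real) \<Rightarrow> nat \<Rightarrow> real" where
  "tgrid tau n = (\<Sum>k=1..n. tau k)"

definition ratio :: "(nat \<Rightarrow> real) \<Rightarrow> nat \<Rightarrow> real" where
  "ratio tau k = (if k \<le> 1 then 0 else tau k / tau (k - 1))"

definition b0 :: "(nat \<Rightarrow> real) \<Rightarrow> nat \<Rightarrow> real" where
  "b0 tau n = (if n = 1 then 1 / tau 1
     else (1 + 2 * ratio tau n) / (tau n * (1 + ratio tau n)))"

definition b1 :: "(nat \<Rightarrow> real) \<Rightarrow> nat \<Rightarrow> real" where
  "b1 tau n = (if n = 1 then 0
     else - ((ratio tau n)^2 / (tau n * (1 + ratio tau n))))"

definition dker :: "(nat \<Rightarrow> real) \<Rightarrow> real \<Rightarrow> nat \<Rightarrow> nat \<Rightarrow> real" where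
  "dker tau eta n j = (if j = 0 then b0 tau n
     else eta ^ (j - 1) * (b0 tau n * eta + b1 tau n))"

end

theory Submission
  imports Defs
begin

text \<open>
  With \<open>\<delta>w(k) = w(k) - w(k-1)\<close> and \<open>S(n) = \<Sum>\<^sub>k \<eta>\<^sup>n\<^sup>-\<^sup>k \<delta>w(k)\<close>, the DOC kernels are built so
  that the left-hand side of the hypothesis collapses to the BDF2 form
  \<open>b0(n) S(n) + b1(n) S(n-1) = b0(n) (S(n) - \<rho>(n) S(n-1))\<close> with \<open>\<rho>(n) = r(n)\<^sup>2/(1+2r(n)) \<le> \<eta>\<close>.
  So the positive parts of \<open>S\<close> obey a contractive recursion with factor \<open>\<eta> < 1\<close>, and as
  \<open>w(n) - w(0) = (1-\<eta>) \<Sum>\<^sub>k\<^sub><\<^sub>n S(k) + S(n)\<close>, this gives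
  \<open>w(n) \<le> \<Phi>(n) = w(0) + \<Sum>\<^sub>j\<^sub>\<le>\<^sub>n (\<kappa> L(j) + g(j))/b0(j)\<close> with \<open>L(j) = \<Sum>\<^sub>k \<lambda>\<^sup>j\<^sup>-\<^sup>k w(k)\<close>.
  Since \<open>\<Phi>\<close> is nondecreasing, \<open>L(j) \<le> \<Phi>(j)/(1-\<lambda>)\<close>, which makes this an implicit one-step
  inequality for \<open>\<Phi>\<close>; the condition \<open>b0 \<ge> 2\<kappa>\<close> lets it be solved with growth factor
  \<open>exp(2\<kappa>\<tau>(n)/(1-\<lambda>))\<close>, and a discrete Gronwall argument concludes.
\<close>

definition geom_conv :: "real \<Rightarrow> (nat \<Rightarrow> real) \<Rightarrow> nat \<Rightarrow> real" where
  "geom_conv e f n = (\<Sum>k=1..n. e ^ (n - k) * f k)"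

lemma geom_conv_0 [simp]: "geom_conv e f 0 = 0"
  by (simp add: geom_conv_def)

lemma geom_conv_Suc: "geom_conv e f (Suc n) = e * geom_conv e f n + f (Suc n)"
proof -
  have "(\<Sum>k=1..n. e ^ (Suc n - k) * f k) = e * (\<Sum>k=1..n. e ^ (n - k) * f k)"
    unfolding sum_distrib_left by (rule sum.cong) (auto simp: Suc_diff_le)
  then show ?thesis by (simp add: geom_conv_def)
qed

lemma sum_eq_geom_conv:
  "(\<Sum>k=1..n. f k) = (1 - e) * (\<Sum>k<n. geom_conv e f k) + geom_conv e f n"
  by (induction n) (simp_all add: geom_conv_Suc algebra_simps)

lemma geom_conv_le_geometric_bound:
  assumes "\<And>k. 1 \<le> k \<Longrightarrow> k \<le> n \<Longrightarrow> f k \<le> M" and "0 \<le> M" and "0 \<le> e" and "e < 1"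
  shows "geom_conv e f n \<le> M / (1 - e)"
  using assms(1)
proof (induction n)
  case 0
  then show ?case using assms(2,4) by simp
next
  case (Suc n)
  have "geom_conv e f (Suc n) \<le> e * (M / (1 - e)) + M"
    unfolding geom_conv_Suc using Suc assms(3) by (intro add_mono mult_left_mono) auto
  also have "\<dots> = M / (1 - e)"
    using assms(4) by (simp add: field_simps)
  finally show ?case .
qed

lemma geom_conv_nonneg:
  assumes "0 \<le> e" and "\<And>k. 1 \<le> k \<Longrightarrow> k \<le> n \<Longrightarrow> 0 \<le> f k"
  shows "0 \<le> geom_conv e f n"
  unfolding geom_conv_def using assms by (intro sum_nonneg) auto

lemma sum_telescope_from_1:
  fixes w :: "nat \<Rightarrow> real"
  shows "(\<Sum>k=1..n. w k - w (k - 1)) = w n - w 0"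
  by (induction n) simp_all

text \<open>No bound on \<open>rho 1\<close> is needed because \<open>geom_conv eta f 0 = 0\<close>.\<close>
lemma sum_le_sum_of_geom_conv_recursion:
  fixes f h rho :: "nat \<Rightarrow> real"
  assumes "eta < 1"
    and step: "\<And>m. m < n \<Longrightarrow>
      geom_conv eta f (Suc m) - rho (Suc m) * geom_conv eta f m \<le> h (Suc m)"
    and rho_nonneg: "\<And>k. 1 \<le> k \<Longrightarrow> k \<le> n \<Longrightarrow> 0 \<le> rho k"
    and rho_le: "\<And>k. 2 \<le> k \<Longrightarrow> k \<le> n \<Longrightarrow> rho k \<le> eta"
    and h_nonneg: "\<And>k. 1 \<le> k \<Longrightarrow> k \<le> n \<Longrightarrow> 0 \<le> h k"
  shows "(\<Sum>k=1..n. f k) \<le> (\<Sum>k=1..n. h k)"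
proof -
  define C where "C = geom_conv eta f"
  define P where "P k = max (C k) 0" for k
  have P_step: "P (Suc m) \<le> eta * P m + h (Suc m)" if "m < n" for m
  proof (cases m)
    case 0
    then show ?thesis using step[OF that] h_nonneg[of 1] that by (simp add: P_def C_def)
  next
    case (Suc m')
    have "0 \<le> rho (Suc m)" "rho (Suc m) \<le> eta" "0 \<le> h (Suc m)"
      using rho_nonneg rho_le h_nonneg that Suc by auto
    moreover have "C (Suc m) - rho (Suc m) * C m \<le> h (Suc m)"
      using step[OF that] by (simp add: C_def)
    moreover have "rho (Suc m) * C m \<le> rho (Suc m) * P m"
      using calculation(1) by (intro mult_left_mono) (auto simp: P_def)
    moreover have "rho (Suc m) * P m \<le> eta * P m"
      using calculation(2) by (intro mult_right_mono) (auto simp: P_def)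
    ultimately show ?thesis
      by (auto simp: P_def intro: mult_nonneg_nonneg)
  qed
  have P_sum: "(1 - eta) * (\<Sum>k<m. P k) + P m \<le> (\<Sum>k=1..m. h k)" if "m \<le> n" for m
    using that
  proof (induction m)
    case 0
    then show ?case by (simp add: P_def C_def)
  next
    case (Suc m)
    then have "(1 - eta) * (\<Sum>k<Suc m. P k) + P (Suc m)
        \<le> (1 - eta) * (\<Sum>k<m. P k) + P m + h (Suc m)"
      using P_step[of m] by (simp add: algebra_simps)
    also have "\<dots> \<le> (\<Sum>k=1..Suc m. h k)"
      using Suc by simp
    finally show ?case .
  qed
  have "(\<Sum>k=1..n. f k) = (1 - eta) * (\<Sum>k<n. C k) + C n"
    unfolding C_def by (rule sum_eq_geom_conv)
  also have "\<dots> \<le> (1 - eta) * (\<Sum>k<n. P k) + P n"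
    using assms(1) by (intro add_mono mult_left_mono sum_mono) (auto simp: P_def)
  also have "\<dots> \<le> (\<Sum>k=1..n. h k)"
    using P_sum by simp
  finally show ?thesis .
qed

lemma b0_ge_inverse_step:
  assumes "0 < tau n" and "0 \<le> ratio tau n"
  shows "1 / tau n \<le> b0 tau n"
proof -
  have "1 \<le> (1 + 2 * ratio tau n) / (1 + ratio tau n)"
    using assms(2) by simp
  then have "1 / tau n \<le> (1 + 2 * ratio tau n) / (1 + ratio tau n) / tau n"
    using assms(1) by (intro divide_right_mono) auto
  then show ?thesis
    by (cases "n = 1") (auto simp: b0_def mult.commute)
qed

lemma b1_eq_neg_b0:
  assumes "1 + 2 * ratio tau n \<noteq> 0"
  shows "b1 tau n = - ((ratio tau n)\<^sup>2 / (1 + 2 * ratio tau n)) * b0 tau n"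
  using assms by (simp add: b1_def b0_def ratio_def)

lemma dker_conv_eq:
  "(\<Sum>k=1..n. dker tau eta n (n - k) * f k)
     = b0 tau n * geom_conv eta f n + b1 tau n * geom_conv eta f (n - 1)"
proof (cases n)
  case 0
  then show ?thesis by simp
next
  case (Suc m)
  have "(\<Sum>k=1..m. dker tau eta (Suc m) (Suc m - k) * f k)
      = (b0 tau (Suc m) * eta + b1 tau (Suc m)) * geom_conv eta f m"
    unfolding geom_conv_def sum_distrib_left
    by (rule sum.cong) (auto simp: dker_def Suc_diff_le)
  moreover have "dker tau eta (Suc m) 0 = b0 tau (Suc m)"
    by (simp add: dker_def)
  ultimately show ?thesis
    using Suc by (simp add: geom_conv_Suc algebra_simps)
qed

lemma dker_conv_le_imp_le_sum:
  fixes tau w R :: "nat \<Rightarrow> real"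
  assumes tau_pos: "\<And>k. 1 \<le> k \<Longrightarrow> k \<le> N \<Longrightarrow> tau k > 0"
    and ratio_pos: "\<And>k. 2 \<le> k \<Longrightarrow> k \<le> N \<Longrightarrow> 0 < ratio tau k"
    and eta_lower: "\<And>k. 2 \<le> k \<Longrightarrow> k \<le> N \<Longrightarrow>
                     (ratio tau k)\<^sup>2 / (1 + 2 * ratio tau k) \<le> eta"
    and eta_lt1: "eta < 1"
    and R_nonneg: "\<And>n. 1 \<le> n \<Longrightarrow> n \<le> N \<Longrightarrow> 0 \<le> R n"
    and conv_le: "\<And>n. 1 \<le> n \<Longrightarrow> n \<le> N \<Longrightarrow>
       (\<Sum>k=1..n. dker tau eta n (n - k) * (w k - w (k - 1))) \<le> R n"
    and "n \<le> N"
  shows "w n \<le> w 0 + (\<Sum>j=1..n. R j / b0 tau j)"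
proof -
  define rho where "rho k = (ratio tau k)\<^sup>2 / (1 + 2 * ratio tau k)" for k
  define f where "f k = w k - w (k - 1)" for k
  have ratio_nonneg: "0 \<le> ratio tau k" if "1 \<le> k" "k \<le> N" for k
    using ratio_pos[of k] that by (cases "k = 1") (auto simp: ratio_def)
  have b0_pos: "0 < b0 tau k" if "1 \<le> k" "k \<le> N" for k
    using b0_ge_inverse_step[OF tau_pos[OF that] ratio_nonneg[OF that]] tau_pos[OF that]
    by (meson less_le_trans zero_less_divide_1_iff)
  have step: "geom_conv eta f (Suc m) - rho (Suc m) * geom_conv eta f m
      \<le> R (Suc m) / b0 tau (Suc m)" if "m < n" for m
  proof -
    have k: "1 \<le> Suc m" "Suc m \<le> N" using that \<open>n \<le> N\<close> by auto
    have "b0 tau (Suc m) * (geom_conv eta f (Suc m) - rho (Suc m) * geom_conv eta f m)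
        = b0 tau (Suc m) * geom_conv eta f (Suc m) + b1 tau (Suc m) * geom_conv eta f m"
      using ratio_nonneg[OF k] by (simp add: b1_eq_neg_b0 rho_def algebra_simps)
    also have "\<dots> = (\<Sum>k=1..Suc m. dker tau eta (Suc m) (Suc m - k) * f k)"
      using dker_conv_eq[of tau eta "Suc m" f] by simp
    also have "\<dots> \<le> R (Suc m)"
      using conv_le[OF k] by (simp add: f_def)
    finally show ?thesis
      using b0_pos[OF k] by (simp add: field_simps mult.commute)
  qed
  have "w n - w 0 = (\<Sum>k=1..n. f k)"
    unfolding f_def by (rule sum_telescope_from_1[symmetric])
  also have "\<dots> \<le> (\<Sum>k=1..n. R k / b0 tau k)"
    using eta_lt1 step \<open>n \<le> N\<close> ratio_nonneg eta_lower R_nonneg b0_pos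
    by (intro sum_le_sum_of_geom_conv_recursion[where rho = rho])
       (auto simp: rho_def intro!: divide_nonneg_pos)
  finally show ?thesis by simp
qed

lemma implicit_step_le_exp:
  fixes x y e c lam :: real
  assumes "0 \<le> e" "e \<le> 1 / 2" "0 \<le> lam" "lam < 1" "0 \<le> x" "0 \<le> y" "0 \<le> c"
    and implicit: "y \<le> x + e * (y + lam * x / (1 - lam)) + c"
  shows "y \<le> exp (2 * e / (1 - lam)) * x + 2 * c"
proof -
  define A where "A = 1 + e * lam / (1 - lam)"
  have "1 \<le> (1 + 2 * e) * (1 - e)"
  proof -
    have "e * (2 * e) \<le> e * 1"
      using assms(1,2) by (intro mult_left_mono) auto
    then show ?thesis by (simp add: algebra_simps)
  qed
  then have "y \<le> (1 + 2 * e) * ((1 - e) * y)"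
    using mult_right_mono[OF _ assms(6)] by fastforce
  also have "(1 - e) * y \<le> A * x + c"
    using implicit assms(4) unfolding A_def by (simp add: field_simps)
  then have "(1 + 2 * e) * ((1 - e) * y) \<le> (1 + 2 * e) * (A * x + c)"
    using assms(1) by (intro mult_left_mono) auto
  also have "\<dots> = ((1 + 2 * e) * A) * x + (1 + 2 * e) * c"
    by (simp add: algebra_simps)
  also have "(1 + 2 * e) * A \<le> exp (2 * e / (1 - lam))"
  proof -
    have "(1 + 2 * e) * A \<le> exp (2 * e) * exp (e * lam / (1 - lam))"
      unfolding A_def using assms(1,3,4) by (intro mult_mono) auto
    also have "2 * e + e * lam / (1 - lam) = e * (2 - lam) / (1 - lam)"
      using assms(4) by (simp add: field_simps)
    then have "exp (2 * e) * exp (e * lam / (1 - lam)) = exp (e * (2 - lam) / (1 - lam))"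
      by (simp add: exp_add[symmetric])
    also have "e * (2 - lam) / (1 - lam) \<le> 2 * e / (1 - lam)"
      using assms(1,3,4) by (intro divide_right_mono) (auto simp: algebra_simps)
    finally show ?thesis by simp
  qed
  then have "((1 + 2 * e) * A) * x \<le> exp (2 * e / (1 - lam)) * x"
    using assms(5) by (rule mult_right_mono)
  also have "(1 + 2 * e) * c \<le> 2 * c"
    using mult_right_mono[of "1 + 2 * e" 2 c] assms(2,7) by simp
  finally show ?thesis by simp
qed

lemma discrete_gronwall_tgrid:
  fixes y c tau :: "nat \<Rightarrow> real"
  assumes "0 \<le> a"
    and tau_nonneg: "\<And>k. 1 \<le> k \<Longrightarrow> k \<le> n \<Longrightarrow> 0 \<le> tau k"
    and c_nonneg: "\<And>k. 1 \<le> k \<Longrightarrow> k \<le> n \<Longrightarrow> 0 \<le> c k"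
    and step: "\<And>m. m < n \<Longrightarrow> y (Suc m) \<le> exp (a * tau (Suc m)) * y m + c (Suc m)"
  shows "y n \<le> exp (a * tgrid tau n) * (y 0 + (\<Sum>k=1..n. c k))"
  using assms(2-)
proof (induction n)
  case 0
  then show ?case by (simp add: tgrid_def)
next
  case (Suc m)
  have exp_tgrid: "exp (a * tgrid tau (Suc m)) = exp (a * tau (Suc m)) * exp (a * tgrid tau m)"
    by (simp add: tgrid_def distrib_left exp_add)
  have "0 \<le> tgrid tau (Suc m)"
    unfolding tgrid_def using Suc.prems(1) by (intro sum_nonneg) auto
  then have c_le: "c (Suc m) \<le> exp (a * tgrid tau (Suc m)) * c (Suc m)"
    using \<open>0 \<le> a\<close> Suc.prems(2)[of "Suc m"] by (simp add: mult_le_cancel_right1)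
  have "y (Suc m) \<le> exp (a * tau (Suc m)) * y m + c (Suc m)"
    using Suc.prems(3) by simp
  also have "\<dots> \<le> exp (a * tau (Suc m)) * (exp (a * tgrid tau m) * (y 0 + (\<Sum>k=1..m. c k)))
      + exp (a * tgrid tau (Suc m)) * c (Suc m)"
    using Suc c_le by (intro add_mono mult_left_mono) auto
  also have "\<dots> = exp (a * tgrid tau (Suc m)) * (y 0 + (\<Sum>k=1..Suc m. c k))"
    unfolding exp_tgrid by (simp add: algebra_simps)
  finally show ?case .
qed

lemma geom_conv_gronwall:
  fixes tau beta g w :: "nat \<Rightarrow> real"
  assumes tau_pos: "\<And>k. 1 \<le> k \<Longrightarrow> k \<le> N \<Longrightarrow> 0 < tau k"
    and beta_ge_kappa: "\<And>k. 1 \<le> k \<Longrightarrow> k \<le> N \<Longrightarrow> 2 * kappa \<le> beta k"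
    and beta_ge_inverse: "\<And>k. 1 \<le> k \<Longrightarrow> k \<le> N \<Longrightarrow> 1 / tau k \<le> beta k"
    and kappa: "0 \<le> kappa" and lam: "0 \<le> lam" "lam < 1"
    and g_nonneg: "\<And>k. 1 \<le> k \<Longrightarrow> k \<le> N \<Longrightarrow> 0 \<le> g k"
    and w_nonneg: "\<And>k. k \<le> N \<Longrightarrow> 0 \<le> w k"
    and w_le: "\<And>n. n \<le> N \<Longrightarrow>
      w n \<le> w 0 + (\<Sum>j=1..n. (kappa * geom_conv lam w j + g j) / beta j)"
    and "n \<le> N"
  shows "w n \<le> 2 * exp (2 * kappa * tgrid tau n / (1 - lam)) * (w 0 + (\<Sum>j=1..n. g j / beta j))"
proof -
  define Phi where "Phi m = w 0 + (\<Sum>j=1..m. (kappa * geom_conv lam w j + g j) / beta j)" for m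
  define a where "a = 2 * kappa / (1 - lam)"
  have beta_pos: "0 < beta k" if "1 \<le> k" "k \<le> N" for k
    using beta_ge_inverse[OF that] tau_pos[OF that] by (meson less_le_trans zero_less_divide_1_iff)
  have term_nonneg: "0 \<le> (kappa * geom_conv lam w j + g j) / beta j" if "1 \<le> j" "j \<le> N" for j
    using geom_conv_nonneg[of lam j w] lam w_nonneg that kappa g_nonneg[OF that] beta_pos[OF that]
    by simp
  have Phi_mono: "Phi k \<le> Phi m" if "k \<le> m" "m \<le> N" for k m
    unfolding Phi_def using that term_nonneg by (intro add_left_mono sum_mono2) auto
  have Phi_nonneg: "0 \<le> Phi m" if "m \<le> N" for m
    using Phi_mono[of 0 m] w_nonneg[of 0] that by (simp add: Phi_def)
  have w_le_Phi: "w m \<le> Phi m" if "m \<le> N" for m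
    using w_le[OF that] by (simp add: Phi_def)
  have step: "Phi (Suc m) \<le> exp (a * tau (Suc m)) * Phi m + 2 * (g (Suc m) / beta (Suc m))"
    if "m < N" for m
  proof -
    define e where "e = kappa / beta (Suc m)"
    define c where "c = g (Suc m) / beta (Suc m)"
    have k: "1 \<le> Suc m" "Suc m \<le> N" using that by auto
    have e: "0 \<le> e" "e \<le> 1 / 2" "e \<le> kappa * tau (Suc m)"
      using beta_pos[OF k] beta_ge_kappa[OF k] beta_ge_inverse[OF k] tau_pos[OF k] kappa
      by (auto simp: e_def field_simps mult_le_cancel_left1)
    have Phi_Suc: "Phi (Suc m) = Phi m + e * (w (Suc m) + lam * geom_conv lam w m) + c"
      by (simp add: Phi_def e_def c_def geom_conv_Suc add_divide_distrib)
    have "geom_conv lam w m \<le> Phi m / (1 - lam)"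
      using w_le_Phi Phi_mono that lam Phi_nonneg[of m]
      by (intro geom_conv_le_geometric_bound) (meson order_trans less_imp_le_nat le_trans)+
    from mult_left_mono[OF this lam(1)]
    have "e * (w (Suc m) + lam * geom_conv lam w m) \<le> e * (Phi (Suc m) + lam * Phi m / (1 - lam))"
      using e(1) w_le_Phi[OF k(2)] by (intro mult_left_mono add_mono) auto
    then have "Phi (Suc m) \<le> Phi m + e * (Phi (Suc m) + lam * Phi m / (1 - lam)) + c"
      using Phi_Suc by linarith
    then have "Phi (Suc m) \<le> exp (2 * e / (1 - lam)) * Phi m + 2 * c"
      using e lam Phi_nonneg that g_nonneg[OF k] beta_pos[OF k]
      by (intro implicit_step_le_exp) (auto simp: c_def)
    also have "exp (2 * e / (1 - lam)) \<le> exp (a * tau (Suc m))"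
      using e(3) lam by (simp add: a_def divide_right_mono)
    finally show ?thesis
      using Phi_nonneg[of m] that by (simp add: c_def mult_right_mono)
  qed
  have "w n \<le> Phi n"
    using w_le_Phi[OF \<open>n \<le> N\<close>] .
  also have "\<dots> \<le> exp (a * tgrid tau n) * (Phi 0 + (\<Sum>j=1..n. 2 * (g j / beta j)))"
    using step \<open>n \<le> N\<close> tau_pos g_nonneg beta_pos kappa lam
    by (intro discrete_gronwall_tgrid) (auto simp: a_def less_imp_le)
  also have "\<dots> \<le> exp (a * tgrid tau n) * (2 * (w 0 + (\<Sum>j=1..n. g j / beta j)))"
    using w_nonneg[of 0] by (intro mult_left_mono) (auto simp: Phi_def sum_distrib_left)
  also have "\<dots> = 2 * exp (a * tgrid tau n) * (w 0 + (\<Sum>j=1..n. g j / beta j))"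
    by simp
  finally show ?thesis by (simp add: a_def)
qed

theorem lemma5p1:
  fixes tau :: "nat \<Rightarrow> real" and N :: nat and eta kappa lam :: real
    and g w :: "nat \<Rightarrow> real"
  assumes tau_pos: "\<And>k. 1 \<le> k \<Longrightarrow> k \<le> N \<Longrightarrow> tau k > 0"
    and r_bound: "\<And>k. 2 \<le> k \<Longrightarrow> k \<le> N \<Longrightarrow>
                     0 < ratio tau k \<and> ratio tau k < 1 + sqrt 2"
    and eta_lower: "\<And>k. 2 \<le> k \<Longrightarrow> k \<le> N \<Longrightarrow>
                     (ratio tau k)^2 / (1 + 2 * ratio tau k) \<le> eta"
    and eta_lt1: "eta < 1"
    and kappa_pos: "kappa > 0"
    and lam: "0 < lam" "lam < 1"
    and g_nonneg: "\<And>k. 1 \<le> k \<Longrightarrow> k \<le> N \<Longrightarrow> g k \<ge> 0"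
    and w_nonneg: "\<And>k. k \<le> N \<Longrightarrow> w k \<ge> 0"
    and ineq: "\<And>n. 1 \<le> n \<Longrightarrow> n \<le> N \<Longrightarrow>
       (\<Sum>k=1..n. dker tau eta n (n - k) * (w k - w (k - 1)))
         \<le> kappa * (\<Sum>k=1..n. lam ^ (n - k) * w k) + g n"
    and b0_big: "\<And>n. 1 \<le> n \<Longrightarrow> n \<le> N \<Longrightarrow> b0 tau n \<ge> 2 * kappa"
  shows "\<And>n. 1 \<le> n \<Longrightarrow> n \<le> N \<Longrightarrow>
     w n \<le> 2 * exp (2 * kappa * tgrid tau n / (1 - lam))
               * (w 0 + (\<Sum>j=1..n. g j / b0 tau j))"
proof -
  \<comment> \<open>The bound \<open>ratio tau k < 1 + sqrt 2\<close> only guarantees that an admissible \<open>eta < 1\<close> exists.\<close>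
  fix n assume n: "1 \<le> n" "n \<le> N"
  have ratio_nonneg: "0 \<le> ratio tau k" if "1 \<le> k" "k \<le> N" for k
    using r_bound[of k] that by (cases "k = 1") (auto simp: ratio_def)
  have R_nonneg: "0 \<le> kappa * geom_conv lam w k + g k" if "1 \<le> k" "k \<le> N" for k
    using geom_conv_nonneg[of lam k w] lam w_nonneg kappa_pos g_nonneg[OF that] that by simp
  have w_le: "w m \<le> w 0 + (\<Sum>j=1..m. (kappa * geom_conv lam w j + g j) / b0 tau j)"
    if "m \<le> N" for m
    using tau_pos r_bound eta_lower eta_lt1 R_nonneg ineq that
    by (intro dker_conv_le_imp_le_sum[of N tau eta]) (auto simp: geom_conv_def)
  show "w n \<le> 2 * exp (2 * kappa * tgrid tau n / (1 - lam))
               * (w 0 + (\<Sum>j=1..n. g j / b0 tau j))"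
    using tau_pos b0_big b0_ge_inverse_step[OF tau_pos ratio_nonneg] kappa_pos lam g_nonneg
      w_nonneg w_le n(2)
    by (intro geom_conv_gronwall[where beta = "b0 tau"]) auto
qed

end
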